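(* Let $f:\mathbb{T}\to\mathbb{R}$ and $\nu\ge0$. For all $t\in\mathbb{T}^\kappa$, $$({}_h\Delta_{\rho(b)}^{-\nu}f^{\Delta})(t-\nu h)=\frac{\nu}{\Gamma(\nu+1)}(b+\nu h-\sigma(t))_h^{(\nu-1)}f(b)+\bigl[\tau\mapsto({}_h\Delta_b^{-\nu}f)(\tau-\nu h)\bigr]^{\Delta}(t),$$ where on the left the right fractional $h$-sum with upper endpoint $\rho(b)=b-h$ is applied to $f^\Delta$ (a function on $\mathbb{T}^\kappa$).
   Context: Let $a\in\mathbb{R}$, $h>0$, $b=a+kh$ with $k\in\mathbb{N}$, $\mathbb{T}=\{a,a+h,\dots,b\}$, $\mathbb{T}^\kappa=\mathbb{T}\setminus\{b\}$, $\sigma(t)=t+h$, $\rho(t)=t-h$, $g^\Delta(t)=(g(t+h)-g(t))/h$. For $c\le d$ in $\{a+jh:j\in\mathbb{Z}\}$, $\int_c^dg(s)\Delta s:=h\sum_{j=0}^{(d-c)/h-1}g(c+jh)$. $h$-factorial: $x_h^{(y)}:=h^y\Gamma(\frac{x}{h}+1)/\Gamma(\frac{x}{h}+1-y)$ (division at a pole yields zero). For $\nu\ge0$, $c\in\mathbb{T}$ and $g$ defined on $\{s\in\mathbb{T}:s\le c\}$, the right fractional $h$-sum with upper endpoint $c$ (written at the shifted point) is, for $t\in\mathbb{T}$, $t\le c$: $({}_h\Delta_c^{-\nu}g)(t-\nu h):=h^\nu g(t)+\frac{\nu}{\Gamma(\nu+1)}\int_{\sigma(t)}^{\sigma(c)}(s+\nu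 h-\sigma(t))_h^{(\nu-1)}g(s)\Delta s.$ *)

theory Defs
  imports "HOL-Analysis.Analysis"
begin

text \<open>Time scale T = {a, a+h, ..., b} with b = a + k h; functions on T are
represented as functions real => real of which only the values on T matter.\<close>

definition hdelta :: "real \<Rightarrow> (real \<Rightarrow> real) \<Rightarrow> real \<Rightarrow> real" where
  "hdelta h g t = (g (t + h) - g t) / h"

text \<open>Delta integral from c to d (d - c a nonnegative multiple of h).\<close>
definition hint :: "real \<Rightarrow> real \<Rightarrow> real \<Rightarrow> (real \<Rightarrow> real) \<Rightarrow> real" where
  "hint h c d g = h * (\<Sum>j<nat (round ((d - c) / h)). g (c + real j * h))"

text \<open>h-factorial x_h^(y); division at a pole of Gamma yields zero.\<close>
definition hfact :: "real \<Rightarrow> real \<Rightarrow> real \<Rightarrow> real" where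
  "hfact h x y = (if x / h + 1 - y \<in> \<int>\<^sub>\<le>\<^sub>0 then 0
      else h powr y * Gamma (x / h + 1) / Gamma (x / h + 1 - y))"

text \<open>rfsum h nu c g t = (right fractional h-sum with upper endpoint c of g)(t - nu h).\<close>
definition rfsum :: "real \<Rightarrow> real \<Rightarrow> real \<Rightarrow> (real \<Rightarrow> real) \<Rightarrow> real \<Rightarrow> real" where
  "rfsum h \<nu> c g t = h powr \<nu> * g t
     + \<nu> / Gamma (\<nu> + 1) * hint h (t + h) (c + h) (\<lambda>s. hfact h (s + \<nu> * h - (t + h)) (\<nu> - 1) * g s)"

end

theory Submission
  imports Defs
begin

(* On the grid, a right fractional h-sum is a finite sum: if the upper
   endpoint is c = t + m h, then
     rfsum h nu c g t = h^nu g(t) + nu/Gamma(nu+1) * h * sum_{i<m} K_i g(t + (i+1) h)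
   with the translation-invariant kernel K_i = (i h + nu h)_h^(nu-1)  (lemma rfsum_grid).
   Write b = t + (n+1) h.  The three fractional sums occurring in the theorem are then
   finite sums with the same kernel: the left side has endpoint b - h = t + n h, and the
   difference quotient on the right compares the sum at t+h (endpoint b = (t+h) + n h)
   with the sum at t (endpoint b = t + (n+1) h).  The latter has one extra term
   K_n f(b), which is exactly the boundary term of the theorem; the remaining n terms
   of the difference quotient are the left-hand sum applied to the difference quotient
   of f, by linearity. *)

lemma hint_grid:
  assumes "h > 0"
  shows "hint h c (c + real m * h) G = h * (\<Sum>j<m. G (c + real j * h))"
proof -
  have "(c + real m * h - c) / h = real m" using assms by simp
  then have "nat (round ((c + real m * h - c) / h)) = m"
    by (metis nat_int round_of_nat)
  then show ?thesis unfolding hint_def by simp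
qed

definition rf_kernel :: "real \<Rightarrow> real \<Rightarrow> nat \<Rightarrow> real" where
  "rf_kernel h \<nu> i = hfact h ((real i + \<nu>) * h) (\<nu> - 1)"

lemma rfsum_grid:
  assumes "h > 0"
  shows "rfsum h \<nu> (t + real m * h) g t = h powr \<nu> * g t
           + \<nu> / Gamma (\<nu> + 1) * h * (\<Sum>i<m. rf_kernel h \<nu> i * g (t + real (Suc i) * h))"
proof -
  have endpoint: "t + real m * h + h = (t + h) + real m * h" by simp
  have summand: "hfact h (t + h + real i * h + \<nu> * h - (t + h)) (\<nu> - 1) * g (t + h + real i * h)
      = rf_kernel h \<nu> i * g (t + real (Suc i) * h)" for i
    unfolding rf_kernel_def by (simp add: algebra_simps)
  show ?thesis
    unfolding rfsum_def endpoint hint_grid[OF assms] summand by simp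
qed

theorem mainTheorem8:
  fixes a h b \<nu> t :: real and k :: nat and f :: "real \<Rightarrow> real"
  assumes "h > 0" and "b = a + real k * h" and "\<nu> \<ge> 0"
    and "t \<in> {a + real j * h | j. j < k}"
  shows "rfsum h \<nu> (b - h) (hdelta h f) t
       = \<nu> / Gamma (\<nu> + 1) * hfact h (b + \<nu> * h - (t + h)) (\<nu> - 1) * f b
         + hdelta h (\<lambda>\<tau>. rfsum h \<nu> b f \<tau>) t"
proof -
  obtain j where t: "t = a + real j * h" and "j < k" using assms(4) by auto
  define n where "n = k - j - 1"
  have b: "b = t + real (Suc n) * h"
    using assms(2) t \<open>j < k\<close> by (simp add: n_def of_nat_diff algebra_simps)
  define C where "C = \<nu> / Gamma (\<nu> + 1)"
  define K where "K = rf_kernel h \<nu>"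
  define S\<^sub>1 where "S\<^sub>1 = (\<Sum>i<n. K i * f (t + real (Suc i) * h + h))"
  define S\<^sub>0 where "S\<^sub>0 = (\<Sum>i<n. K i * f (t + real (Suc i) * h))"
  have lhs: "rfsum h \<nu> (b - h) (hdelta h f) t = h powr \<nu> * hdelta h f t
      + C * h * (\<Sum>i<n. K i * hdelta h f (t + real (Suc i) * h))"
    using rfsum_grid[OF assms(1), of \<nu> t n] by (simp add: b C_def K_def algebra_simps)
  have shifted: "rfsum h \<nu> b f (t + h) = h powr \<nu> * f (t + h) + C * h * S\<^sub>1"
    using rfsum_grid[OF assms(1), of \<nu> "t + h" n f]
    by (simp add: b C_def K_def S\<^sub>1_def algebra_simps)
  have unshifted: "rfsum h \<nu> b f t = h powr \<nu> * f t + C * h * (S\<^sub>0 + K n * f b)"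
    using rfsum_grid[OF assms(1), of \<nu> t "Suc n" f] by (simp add: b C_def K_def S\<^sub>0_def)
  have boundary: "hfact h (b + \<nu> * h - (t + h)) (\<nu> - 1) = K n"
    unfolding K_def rf_kernel_def by (simp add: b algebra_simps)
  have linear: "h * (\<Sum>i<n. K i * hdelta h f (t + real (Suc i) * h)) = S\<^sub>1 - S\<^sub>0"
    unfolding S\<^sub>1_def S\<^sub>0_def sum_distrib_left sum_subtractf[symmetric]
    using assms(1) by (intro sum.cong) (simp_all add: hdelta_def field_simps)
  have "hdelta h (\<lambda>\<tau>. rfsum h \<nu> b f \<tau>) t
      = h powr \<nu> * hdelta h f t + C * (S\<^sub>1 - S\<^sub>0) - C * K n * f b"
    unfolding hdelta_def[of h "\<lambda>\<tau>. rfsum h \<nu> b f \<tau>"] shifted unshifted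
    using assms(1) by (simp add: hdelta_def[of h f] field_simps)
  then show ?thesis
    unfolding lhs boundary C_def[symmetric] mult.assoc linear by (simp add: algebra_simps)
qed

end
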